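(* Let $p, q$ be integers with $p, q \ge 2$. Then for every $\lambda \in \Lambda^{p,q}_{+}$, \[ \mathcal{F}(\lambda; \Lambda^{p,q}) \simeq \begin{cases} \mathcal{F}(T^{p,q}_{2,2}(\lambda); \Lambda^{2,2}) & \text{if } \lambda \in \operatorname{Fix}(T^{2,2}_{p,q} \circ T^{p,q}_{2,2}),\\ \mathrm{pt} & \text{otherwise,} \end{cases} \] where $\simeq$ denotes homotopy equivalence and $\mathrm{pt}$ the one-point space.
   Context: $\mathbb{N}=\{0,1,2,\dots\}$. For an additive commutative monoid $\Lambda$ that is cancellative and has no non-trivial invertible elements, define the partial order $\lambda \le \mu$ iff there is $\nu\in\Lambda$ with $\lambda+\nu=\mu$; write $\lambda<\mu$ for $\lambda\le\mu$, $\lambda\ne\mu$. Let $\Lambda_+=\Lambda\setminus\{0\}$. For a poset $P$, $|P|$ denotes the geometric realization of its order complex (simplices are the finite nonempty chains), and $(x,y)_P=\{z\in P: x<z<y\}$. The Frobenius complex is $\mathcal{F}(\lambda;\Lambda)=|(0,\lambda)_\Lambda|$ for $\lambda\in\Lambda_+$. For positive integers $p,q$, $\Lambda^{p,q}=\langle a,b\mid pa=qb\rangle$ is the quotient of the free commutative monoid $\mathbb{N}a\oplus\mathbb{N}b$ by the congruence generated by $\lambda+pa\sim\lambda+qb$ ($\lambda\in\mathbb{N}a\oplus\mathbb{N}b$). For positive integers $p,q$, the transition function $\tau^p_q:\mathbb{N}\to\mathbb{N}$ is $\tau^p_q(mp+n)=mq+\min\{n,q-1\}$ for $m\in\mathbb{N}$,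 $0\le n<p$. For positive integers $p,q,r,s$, the transition map $T^{p,q}_{r,s}:\Lambda^{p,q}\to\Lambda^{r,s}$ is $T^{p,q}_{r,s}(ma+nb)=\tau^p_r(m)a+\tau^q_s(n)b$ ($m,n\in\mathbb{N}$). For a function $f$ on a set $X$, $\operatorname{Fix} f=\{x\in X: f(x)=x\}$. *)

theory Defs
  imports "HOL-Analysis.Analysis"
begin

text \<open>A poset is given by a carrier set P and a strict order lt on it.
  Simplices of the order complex are the finite nonempty chains. The geometric
  realization is the set of barycentric coordinate functions f : 'a => real
  (nonnegative, with support a finite nonempty chain of P, summing to 1),
  topologised as a subspace of the product topology. For the finite posets
  occurring below, this coincides with the usual (weak) topology.\<close>

definition fin_chain :: "'a set \<Rightarrow> ('a \<Rightarrow> 'a \<Rightarrow> bool) \<Rightarrow> 'a set \<Rightarrow> bool" where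
  "fin_chain P lt S \<longleftrightarrow> S \<subseteq> P \<and> S \<noteq> {} \<and> finite S \<and>
     (\<forall>x\<in>S. \<forall>y\<in>S. x = y \<or> lt x y \<or> lt y x)"

definition order_complex_realization :: "'a set \<Rightarrow> ('a \<Rightarrow> 'a \<Rightarrow> bool) \<Rightarrow> ('a \<Rightarrow> real) topology" where
  "order_complex_realization P lt =
     subtopology (powertop_real UNIV)
       {f. (\<forall>x. 0 \<le> f x) \<and> fin_chain P lt {x. f x \<noteq> 0} \<and> sum f {x. f x \<noteq> 0} = 1}"

text \<open>Elements m a + n b of the free commutative monoid N a + N b are pairs (m,n).\<close>

definition padd :: "nat \<times> nat \<Rightarrow> nat \<times> nat \<Rightarrow> nat \<times> nat" where
  "padd x y = (fst x + fst y, snd x + snd y)"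

definition gen_rel :: "nat \<Rightarrow> nat \<Rightarrow> nat \<times> nat \<Rightarrow> nat \<times> nat \<Rightarrow> bool" where
  "gen_rel p q x y \<longleftrightarrow> (\<exists>l. x = padd l (p, 0) \<and> y = padd l (0, q))"

text \<open>The congruence generated (the generating relation is translation-invariant,
  so its equivalence closure is already a congruence).\<close>
definition lcong :: "nat \<Rightarrow> nat \<Rightarrow> nat \<times> nat \<Rightarrow> nat \<times> nat \<Rightarrow> bool" where
  "lcong p q = equivclp (gen_rel p q)"

definition lcls :: "nat \<Rightarrow> nat \<Rightarrow> nat \<times> nat \<Rightarrow> (nat \<times> nat) set" where
  "lcls p q x = {y. lcong p q x y}"

definition Lam :: "nat \<Rightarrow> nat \<Rightarrow> (nat \<times> nat) set set" where
  "Lam p q = range (lcls p q)"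

definition lzero :: "nat \<Rightarrow> nat \<Rightarrow> (nat \<times> nat) set" where
  "lzero p q = lcls p q (0, 0)"

definition ladd :: "nat \<Rightarrow> nat \<Rightarrow> (nat \<times> nat) set \<Rightarrow> (nat \<times> nat) set \<Rightarrow> (nat \<times> nat) set" where
  "ladd p q X Y = {z. \<exists>x\<in>X. \<exists>y\<in>Y. lcong p q (padd x y) z}"

definition lle :: "nat \<Rightarrow> nat \<Rightarrow> (nat \<times> nat) set \<Rightarrow> (nat \<times> nat) set \<Rightarrow> bool" where
  "lle p q X Y \<longleftrightarrow> (\<exists>N\<in>Lam p q. ladd p q X N = Y)"

definition lless :: "nat \<Rightarrow> nat \<Rightarrow> (nat \<times> nat) set \<Rightarrow> (nat \<times> nat) set \<Rightarrow> bool" where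
  "lless p q X Y \<longleftrightarrow> lle p q X Y \<and> X \<noteq> Y"

definition lopen :: "nat \<Rightarrow> nat \<Rightarrow> (nat \<times> nat) set \<Rightarrow> (nat \<times> nat) set \<Rightarrow> (nat \<times> nat) set set" where
  "lopen p q X Y = {Z \<in> Lam p q. lless p q X Z \<and> lless p q Z Y}"

definition frobenius_complex :: "nat \<Rightarrow> nat \<Rightarrow> (nat \<times> nat) set \<Rightarrow> ((nat \<times> nat) set \<Rightarrow> real) topology" where
  "frobenius_complex p q L = order_complex_realization (lopen p q (lzero p q) L) (lless p q)"

definition tau :: "nat \<Rightarrow> nat \<Rightarrow> nat \<Rightarrow> nat" where
  "tau p q k = (k div p) * q + min (k mod p) (q - 1)"

text \<open>T^{p,q}_{r,s}(m a + n b) = tau^p_r(m) a + tau^q_s(n) b, computed on any representative.\<close>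
definition trans_map :: "nat \<Rightarrow> nat \<Rightarrow> nat \<Rightarrow> nat \<Rightarrow> (nat \<times> nat) set \<Rightarrow> (nat \<times> nat) set" where
  "trans_map p q r s X = (let x = (SOME x. x \<in> X) in lcls r s (tau p r (fst x), tau q s (snd x)))"

end

theory Submission
  imports Defs
begin

text \<open>Write c = T^{p,q}_{2,2} and i = T^{2,2}_{p,q}. Both are monotone, c \<circ> i = id and
  i \<circ> c \<le> id, and c only kills 0. An order-preserving map of finite posets induces a continuous
  map of order complexes by pushing forward barycentric weights, and two pointwise comparable maps
  f \<le> g induce homotopic maps: at time t, the first 1 - t of the mass of a chain is pushed along f
  and the rest along g, which keeps the support a chain. If \<lambda> is fixed by i \<circ> c, then c and i
  restrict to maps between the intervals (0, \<lambda>) and (0, c \<lambda>) whose composites are comparable to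
  the identities, hence are mutually inverse homotopy equivalences. Otherwise i (c \<lambda>) lies in
  (0, \<lambda>), and x \<ge> i (c x) \<le> i (c \<lambda>) contracts the interval to that point.\<close>

section \<open>Order complexes of finite posets\<close>

definition chain_weights :: "'a set \<Rightarrow> ('a \<Rightarrow> 'a \<Rightarrow> bool) \<Rightarrow> ('a \<Rightarrow> real) set" where
  "chain_weights P lt =
     {w. (\<forall>x. 0 \<le> w x) \<and> fin_chain P lt {x. w x \<noteq> 0} \<and> sum w {x. w x \<noteq> 0} = 1}"

definition strict_order_on :: "'a set \<Rightarrow> ('a \<Rightarrow> 'a \<Rightarrow> bool) \<Rightarrow> bool" where
  "strict_order_on P lt \<longleftrightarrow>
     (\<forall>x\<in>P. \<not> lt x x) \<and> (\<forall>x\<in>P. \<forall>y\<in>P. \<forall>z\<in>P. lt x y \<longrightarrow> lt y z \<longrightarrow> lt x z)"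

definition order_preserving ::
  "'a set \<Rightarrow> ('a \<Rightarrow> 'a \<Rightarrow> bool) \<Rightarrow> ('b \<Rightarrow> 'b \<Rightarrow> bool) \<Rightarrow> ('a \<Rightarrow> 'b) \<Rightarrow> bool" where
  "order_preserving P lt lt' f \<longleftrightarrow> (\<forall>x\<in>P. \<forall>y\<in>P. lt x y \<longrightarrow> f x = f y \<or> lt' (f x) (f y))"

definition pushforward :: "'a set \<Rightarrow> ('a \<Rightarrow> 'b) \<Rightarrow> ('a \<Rightarrow> real) \<Rightarrow> 'b \<Rightarrow> real" where
  "pushforward P f w = (\<lambda>v. sum w {x\<in>P. f x = v})"

lemma order_preservingD:
  "order_preserving P lt lt' f \<Longrightarrow> x \<in> P \<Longrightarrow> y \<in> P \<Longrightarrow> lt x y \<Longrightarrow> f x = f y \<or> lt' (f x) (f y)"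
  by (simp add: order_preserving_def)

lemma strict_order_on_irrefl: "strict_order_on P lt \<Longrightarrow> x \<in> P \<Longrightarrow> \<not> lt x x"
  by (simp add: strict_order_on_def)

lemma strict_order_on_trans:
  "strict_order_on P lt \<Longrightarrow> x \<in> P \<Longrightarrow> y \<in> P \<Longrightarrow> z \<in> P \<Longrightarrow> lt x y \<Longrightarrow> lt y z \<Longrightarrow> lt x z"
  unfolding strict_order_on_def by blast

lemma topspace_order_complex_realization:
  "topspace (order_complex_realization P lt) = chain_weights P lt"
  by (simp add: order_complex_realization_def chain_weights_def)

lemma chain_weights_nonneg: "w \<in> chain_weights P lt \<Longrightarrow> 0 \<le> w x"
  by (simp add: chain_weights_def)

lemma chain_weights_support: "w \<in> chain_weights P lt \<Longrightarrow> w x \<noteq> 0 \<Longrightarrow> x \<in> P"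
  by (auto simp: chain_weights_def fin_chain_def)

lemma chain_weights_chain:
  "w \<in> chain_weights P lt \<Longrightarrow> w x \<noteq> 0 \<Longrightarrow> w y \<noteq> 0 \<Longrightarrow> x = y \<or> lt x y \<or> lt y x"
  by (auto simp: chain_weights_def fin_chain_def)

lemma sum_chain_weights:
  assumes "finite P" and w: "w \<in> chain_weights P lt"
  shows "sum w P = 1"
proof -
  have "sum w P = sum w {x. w x \<noteq> 0}"
    using chain_weights_support[OF w] by (intro sum.mono_neutral_right) (use assms in auto)
  then show ?thesis using w by (simp add: chain_weights_def)
qed

lemma chain_weightsI:
  assumes "finite V" "V \<subseteq> P" "\<And>x. 0 \<le> w x" "\<And>x. w x \<noteq> 0 \<Longrightarrow> x \<in> V" "sum w V = 1"
    and "\<And>x y. w x \<noteq> 0 \<Longrightarrow> w y \<noteq> 0 \<Longrightarrow> x = y \<or> lt x y \<or> lt y x"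
  shows "w \<in> chain_weights P lt"
proof -
  have supp: "{x. w x \<noteq> 0} \<subseteq> V" using assms(4) by auto
  have "sum w {x. w x \<noteq> 0} = sum w V"
    by (rule sum.mono_neutral_left[OF assms(1) supp]) simp
  then have sum1: "sum w {x. w x \<noteq> 0} = 1" using assms(5) by simp
  then have "{x. w x \<noteq> 0} \<noteq> {}" by (metis sum.empty zero_neq_one)
  moreover have "finite {x. w x \<noteq> 0}" using finite_subset[OF supp assms(1)] .
  moreover have "{x. w x \<noteq> 0} \<subseteq> P" using supp assms(2) by (rule order_trans)
  moreover have "\<forall>x\<in>{x. w x \<noteq> 0}. \<forall>y\<in>{x. w x \<noteq> 0}. x = y \<or> lt x y \<or> lt y x"
    using assms(6) by blast
  ultimately show ?thesis using sum1 assms(3) unfolding chain_weights_def fin_chain_def by blast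
qed

lemma continuous_map_order_complex_realization_component:
  "continuous_map (order_complex_realization P lt) euclideanreal (\<lambda>w. w x)"
  unfolding order_complex_realization_def by (intro continuous_intros) auto

lemma continuous_map_into_order_complex_realization:
  assumes "\<And>v. continuous_map X euclideanreal (\<lambda>x. h x v)"
    and "h ` topspace X \<subseteq> chain_weights Q lt"
  shows "continuous_map X (order_complex_realization Q lt) h"
  using assms unfolding order_complex_realization_def continuous_map_in_subtopology
  by (simp add: continuous_map_componentwise_UNIV chain_weights_def image_subset_iff_funcset)

lemma pushforward_nonzeroD:
  assumes "pushforward P f w v \<noteq> 0"
  shows "\<exists>x\<in>P. f x = v \<and> w x \<noteq> 0"
proof (rule ccontr)
  assume "\<not> ?thesis"
  then have "pushforward P f w v = 0" unfolding pushforward_def by (intro sum.neutral) auto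
  with assms show False by simp
qed

lemma sum_pushforward:
  assumes "finite P" "finite V" "f ` P \<subseteq> V"
  shows "sum (pushforward P f w) V = sum w P"
  unfolding pushforward_def using sum.group[OF assms] by simp

lemma chain_weights_image_comparable:
  assumes "w \<in> chain_weights P lt" "order_preserving P lt lt' f" "w x \<noteq> 0" "w y \<noteq> 0"
  shows "f x = f y \<or> lt' (f x) (f y) \<or> lt' (f y) (f x)"
proof -
  have x: "x \<in> P" and y: "y \<in> P" using chain_weights_support[OF assms(1)] assms(3,4) by auto
  from chain_weights_chain[OF assms(1,3,4)] consider "x = y" | "lt x y" | "lt y x" by blast
  then show ?thesis using order_preservingD[OF assms(2) x y] order_preservingD[OF assms(2) y x]
    by cases auto
qed

lemma pushforward_in_chain_weights:
  assumes fin: "finite P" and f: "f ` P \<subseteq> Q" "order_preserving P lt lt' f"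
    and w: "w \<in> chain_weights P lt"
  shows "pushforward P f w \<in> chain_weights Q lt'"
proof (rule chain_weightsI[where V = "f ` P"])
  show "0 \<le> pushforward P f w v" for v
    unfolding pushforward_def by (intro sum_nonneg) (simp add: chain_weights_nonneg[OF w])
  have "sum (pushforward P f w) (f ` P) = sum w P"
    by (rule sum_pushforward) (use fin in auto)
  then show "sum (pushforward P f w) (f ` P) = 1" using sum_chain_weights[OF fin w] by simp
  show "u = v \<or> lt' u v \<or> lt' v u"
    if u: "pushforward P f w u \<noteq> 0" and v: "pushforward P f w v \<noteq> 0" for u v
  proof -
    obtain x y where x: "x \<in> P" "f x = u" "w x \<noteq> 0" and y: "y \<in> P" "f y = v" "w y \<noteq> 0"
      using pushforward_nonzeroD[OF u] pushforward_nonzeroD[OF v] by blast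
    then show ?thesis using chain_weights_image_comparable[OF w f(2) x(3) y(3)] by simp
  qed
  show "pushforward P f w v \<noteq> 0 \<Longrightarrow> v \<in> f ` P" for v
    using pushforward_nonzeroD by fastforce
qed (use fin f(1) in simp_all)

lemma continuous_map_pushforward:
  assumes "finite P" "f ` P \<subseteq> Q" "order_preserving P lt lt' f"
  shows "continuous_map (order_complex_realization P lt) (order_complex_realization Q lt')
           (pushforward P f)"
proof (rule continuous_map_into_order_complex_realization)
  show "continuous_map (order_complex_realization P lt) euclideanreal (\<lambda>w. pushforward P f w v)" for v
    unfolding pushforward_def
    by (intro continuous_map_sum continuous_map_order_complex_realization_component)
       (use assms(1) in auto)
  show "pushforward P f ` topspace (order_complex_realization P lt) \<subseteq> chain_weights Q lt'"
    using pushforward_in_chain_weights[OF assms] by (auto simp: topspace_order_complex_realization)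
qed

subsection \<open>Comparable maps induce homotopic maps\<close>

definition mass_below :: "'a set \<Rightarrow> ('a \<Rightarrow> 'a \<Rightarrow> bool) \<Rightarrow> ('a \<Rightarrow> real) \<Rightarrow> 'a \<Rightarrow> real" where
  "mass_below P lt w x = sum w {y\<in>P. lt y x}"

text \<open>The part of the weight of x that lies among the first 1 - t of the total mass, when the
  support chain is listed from the bottom.\<close>

definition leading_mass :: "'a set \<Rightarrow> ('a \<Rightarrow> 'a \<Rightarrow> bool) \<Rightarrow> real \<Rightarrow> ('a \<Rightarrow> real) \<Rightarrow> 'a \<Rightarrow> real" where
  "leading_mass P lt t w x = min (w x) (max 0 (1 - t - mass_below P lt w x))"

definition chain_homotopy ::
  "'a set \<Rightarrow> ('a \<Rightarrow> 'a \<Rightarrow> bool) \<Rightarrow> ('a \<Rightarrow> 'b) \<Rightarrow> ('a \<Rightarrow> 'b) \<Rightarrow> real \<times> ('a \<Rightarrow> real) \<Rightarrow> 'b \<Rightarrow> real" where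
  "chain_homotopy P lt f g tw v =
     pushforward P f (leading_mass P lt (fst tw) (snd tw)) v
   + pushforward P g (\<lambda>x. snd tw x - leading_mass P lt (fst tw) (snd tw) x) v"

lemma mass_below_nonneg: "w \<in> chain_weights P lt \<Longrightarrow> 0 \<le> mass_below P lt w x"
  unfolding mass_below_def by (intro sum_nonneg) (simp add: chain_weights_nonneg)

lemma mass_below_add_le_1:
  assumes "finite P" "strict_order_on P lt" and w: "w \<in> chain_weights P lt" and "x \<in> P"
  shows "mass_below P lt w x + w x \<le> 1"
proof -
  have "mass_below P lt w x + w x = sum w (insert x {y\<in>P. lt y x})"
    using assms strict_order_on_irrefl[OF assms(2,4)] unfolding mass_below_def
    by (subst sum.insert) auto
  also have "\<dots> \<le> sum w P"
    using assms chain_weights_nonneg[OF w] by (intro sum_mono2) auto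
  finally show ?thesis using sum_chain_weights[OF assms(1) w] by simp
qed

lemma mass_below_add_le_mass_below:
  assumes "finite P" "strict_order_on P lt" and w: "w \<in> chain_weights P lt"
    and "x \<in> P" "y \<in> P" "lt y x"
  shows "mass_below P lt w y + w y \<le> mass_below P lt w x"
proof -
  have "mass_below P lt w y + w y = sum w (insert y {z\<in>P. lt z y})"
    using assms strict_order_on_irrefl[OF assms(2,5)] unfolding mass_below_def
    by (subst sum.insert) auto
  also have "\<dots> \<le> sum w {z\<in>P. lt z x}"
    using assms chain_weights_nonneg[OF w] strict_order_on_trans[OF assms(2) _ assms(5,4)]
    by (intro sum_mono2) auto
  finally show ?thesis unfolding mass_below_def .
qed

lemma leading_mass_nonneg: "w \<in> chain_weights P lt \<Longrightarrow> 0 \<le> leading_mass P lt t w x"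
  unfolding leading_mass_def by (simp add: chain_weights_nonneg)

lemma leading_mass_le: "leading_mass P lt t w x \<le> w x"
  unfolding leading_mass_def by simp

lemma leading_mass_0:
  "finite P \<Longrightarrow> strict_order_on P lt \<Longrightarrow> w \<in> chain_weights P lt \<Longrightarrow> x \<in> P \<Longrightarrow>
    leading_mass P lt 0 w x = w x"
  using mass_below_add_le_1[of P lt w x] unfolding leading_mass_def by simp

lemma leading_mass_1: "w \<in> chain_weights P lt \<Longrightarrow> leading_mass P lt 1 w x = 0"
  using mass_below_nonneg[of w P lt x] chain_weights_nonneg[of w P lt x]
  unfolding leading_mass_def by simp

lemma leading_mass_nonzeroD:
  "w \<in> chain_weights P lt \<Longrightarrow> leading_mass P lt t w x \<noteq> 0 \<Longrightarrow>
    w x \<noteq> 0 \<and> mass_below P lt w x < 1 - t"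
  using chain_weights_nonneg[of w P lt x] unfolding leading_mass_def by (smt (verit) min_def max_def)

lemma trailing_mass_nonzeroD:
  "w \<in> chain_weights P lt \<Longrightarrow> w x - leading_mass P lt t w x \<noteq> 0 \<Longrightarrow>
    w x \<noteq> 0 \<and> 1 - t < mass_below P lt w x + w x"
  using chain_weights_nonneg[of w P lt x] unfolding leading_mass_def by (smt (verit) min_def max_def)

lemma leading_mass_before_trailing_mass:
  assumes "finite P" "strict_order_on P lt" and w: "w \<in> chain_weights P lt"
    and lead: "leading_mass P lt t w x \<noteq> 0" and trail: "w y - leading_mass P lt t w y \<noteq> 0"
  shows "x = y \<or> lt x y"
proof -
  have x: "w x \<noteq> 0" "mass_below P lt w x < 1 - t" using leading_mass_nonzeroD[OF w lead] by auto
  have y: "w y \<noteq> 0" "1 - t < mass_below P lt w y + w y" using trailing_mass_nonzeroD[OF w trail] by auto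
  have "\<not> lt y x"
    using mass_below_add_le_mass_below[OF assms(1-3)] chain_weights_support[OF w] x y by force
  then show ?thesis using chain_weights_chain[OF w x(1) y(1)] by blast
qed

lemma chain_homotopy_nonzeroD:
  assumes "chain_homotopy P lt f g (t, w) v \<noteq> 0"
  shows "(\<exists>x\<in>P. f x = v \<and> leading_mass P lt t w x \<noteq> 0)
       \<or> (\<exists>x\<in>P. g x = v \<and> w x - leading_mass P lt t w x \<noteq> 0)"
proof -
  have "pushforward P f (leading_mass P lt t w) v \<noteq> 0
      \<or> pushforward P g (\<lambda>x. w x - leading_mass P lt t w x) v \<noteq> 0"
    using assms by (auto simp: chain_homotopy_def)
  then show ?thesis
  proof
    assume "pushforward P f (leading_mass P lt t w) v \<noteq> 0"
    from pushforward_nonzeroD[OF this] show ?thesis by blast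
  next
    assume "pushforward P g (\<lambda>x. w x - leading_mass P lt t w x) v \<noteq> 0"
    from pushforward_nonzeroD[OF this] show ?thesis by blast
  qed
qed

lemma chain_homotopy_in_chain_weights:
  assumes fin: "finite P" and sP: "strict_order_on P lt" and sQ: "strict_order_on Q lt'"
    and f: "f ` P \<subseteq> Q" "order_preserving P lt lt' f"
    and g: "g ` P \<subseteq> Q" "order_preserving P lt lt' g"
    and fg: "\<forall>x\<in>P. f x = g x \<or> lt' (f x) (g x)"
    and w: "w \<in> chain_weights P lt"
  shows "chain_homotopy P lt f g (t, w) \<in> chain_weights Q lt'"
proof (rule chain_weightsI[where V = "f ` P \<union> g ` P"])
  let ?a = "leading_mass P lt t w" and ?H = "chain_homotopy P lt f g (t, w)"
  have lead: "w x \<noteq> 0" if "?a x \<noteq> 0" for x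
    using leading_mass_nonzeroD[OF w that] by simp
  have trail: "w x \<noteq> 0" if "w x - ?a x \<noteq> 0" for x
    using trailing_mass_nonzeroD[OF w that] by simp
  have mixed: "f x = g y \<or> lt' (f x) (g y)"
    if x: "x \<in> P" "?a x \<noteq> 0" and y: "y \<in> P" "w y - ?a y \<noteq> 0" for x y
    using leading_mass_before_trailing_mass[OF fin sP w x(2) y(2)]
  proof
    assume "x = y"
    then show ?thesis using fg y(1) by blast
  next
    assume "lt x y"
    then have "f x = f y \<or> lt' (f x) (f y)" using order_preservingD[OF f(2) x(1) y(1)] by blast
    moreover have "f y = g y \<or> lt' (f y) (g y)" using fg y(1) by blast
    moreover have "f x \<in> Q" "f y \<in> Q" "g y \<in> Q" using f(1) g(1) x(1) y(1) by auto
    ultimately show ?thesis using strict_order_on_trans[OF sQ, of "f x" "f y" "g y"] by auto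
  qed
  show "u = v \<or> lt' u v \<or> lt' v u" if u: "?H u \<noteq> 0" and v: "?H v \<noteq> 0" for u v
    using chain_homotopy_nonzeroD[OF u] chain_homotopy_nonzeroD[OF v]
  proof (elim disjE bexE conjE)
    fix x y assume "f x = u" "?a x \<noteq> 0" "f y = v" "?a y \<noteq> 0"
    with chain_weights_image_comparable[OF w f(2) lead[of x] lead[of y]] show ?thesis by simp
  next
    fix x y assume "x \<in> P" "f x = u" "?a x \<noteq> 0" "y \<in> P" "g y = v" "w y - ?a y \<noteq> 0"
    with mixed[of x y] show ?thesis by auto
  next
    fix x y assume "x \<in> P" "g x = u" "w x - ?a x \<noteq> 0" "y \<in> P" "f y = v" "?a y \<noteq> 0"
    with mixed[of y x] show ?thesis by auto
  next
    fix x y assume "g x = u" "w x - ?a x \<noteq> 0" "g y = v" "w y - ?a y \<noteq> 0"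
    with chain_weights_image_comparable[OF w g(2) trail[of x] trail[of y]] show ?thesis by simp
  qed
  show "0 \<le> ?H v" for v
    unfolding chain_homotopy_def pushforward_def
    by (intro add_nonneg_nonneg sum_nonneg) (simp_all add: leading_mass_nonneg[OF w] leading_mass_le)
  show "v \<in> f ` P \<union> g ` P" if "?H v \<noteq> 0" for v
    using chain_homotopy_nonzeroD[OF that] by blast
  have "sum ?H (f ` P \<union> g ` P) = sum ?a P + sum (\<lambda>x. w x - ?a x) P"
    unfolding chain_homotopy_def sum.distrib fst_conv snd_conv
    using sum_pushforward[OF fin, of "f ` P \<union> g ` P" f] sum_pushforward[OF fin, of "f ` P \<union> g ` P" g]
      fin by simp
  then show "sum ?H (f ` P \<union> g ` P) = 1"
    by (simp add: sum_subtractf sum_chain_weights[OF fin w])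
  show "finite (f ` P \<union> g ` P)" using fin by simp
  show "f ` P \<union> g ` P \<subseteq> Q" using f(1) g(1) by simp
qed

lemma continuous_map_chain_homotopy:
  assumes "finite P"
  shows "continuous_map (prod_topology (top_of_set {0..1}) (order_complex_realization P lt))
           euclideanreal (\<lambda>tw. chain_homotopy P lt f g tw v)"
proof -
  let ?X = "prod_topology (top_of_set {0..1::real}) (order_complex_realization P lt)"
  have "continuous_map ?X euclideanreal fst"
    by (rule continuous_map_into_fulltopology[OF continuous_map_fst])
  moreover have "continuous_map ?X euclideanreal (\<lambda>tw. snd tw x)" for x
    using continuous_map_compose[OF continuous_map_snd continuous_map_order_complex_realization_component]
    by (simp add: o_def)
  ultimately show ?thesis
    unfolding chain_homotopy_def pushforward_def leading_mass_def mass_below_def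
    by (intro continuous_map_sum continuous_intros) (use assms in auto)
qed

lemma homotopic_pushforward:
  assumes fin: "finite P" and sP: "strict_order_on P lt" and sQ: "strict_order_on Q lt'"
    and f: "f ` P \<subseteq> Q" "order_preserving P lt lt' f"
    and g: "g ` P \<subseteq> Q" "order_preserving P lt lt' g"
    and fg: "\<forall>x\<in>P. f x = g x \<or> lt' (f x) (g x)"
  shows "homotopic_with (\<lambda>_. True) (order_complex_realization P lt) (order_complex_realization Q lt')
           (pushforward P f) (pushforward P g)"
proof -
  let ?X = "prod_topology (top_of_set {0..1::real}) (order_complex_realization P lt)"
  have "continuous_map ?X (order_complex_realization Q lt') (chain_homotopy P lt f g)"
  proof (rule continuous_map_into_order_complex_realization)
    show "continuous_map ?X euclideanreal (\<lambda>tw. chain_homotopy P lt f g tw v)" for v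
      by (rule continuous_map_chain_homotopy[OF fin])
    show "chain_homotopy P lt f g ` topspace ?X \<subseteq> chain_weights Q lt'"
      using chain_homotopy_in_chain_weights[OF assms]
      by (auto simp: topspace_order_complex_realization)
  qed
  moreover have "chain_homotopy P lt f g (0, w) = pushforward P f w" if "w \<in> chain_weights P lt" for w
    unfolding chain_homotopy_def pushforward_def
    using leading_mass_0[OF fin sP that] by (auto intro!: ext sum.neutral)
  moreover have "chain_homotopy P lt f g (1, w) = pushforward P g w" if "w \<in> chain_weights P lt" for w
    unfolding chain_homotopy_def pushforward_def using leading_mass_1[OF that] by simp
  ultimately show ?thesis
    by (subst homotopic_with)
       (auto simp: topspace_order_complex_realization intro!: exI[of _ "chain_homotopy P lt f g"])
qed

lemma pushforward_comp:
  assumes "finite P" "finite Q" "f ` P \<subseteq> Q"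
  shows "pushforward Q g (pushforward P f w) = pushforward P (g \<circ> f) w"
proof
  fix v
  have "pushforward Q g (pushforward P f w) v
      = (\<Sum>y\<in>{y\<in>Q. g y = v}. sum w {x\<in>{x\<in>P. g (f x) = v}. f x = y})"
    unfolding pushforward_def by (intro sum.cong) auto
  also have "\<dots> = sum w {x\<in>P. g (f x) = v}"
    by (rule sum.group) (use assms in auto)
  finally show "pushforward Q g (pushforward P f w) v = pushforward P (g \<circ> f) w v"
    by (simp add: pushforward_def)
qed

lemma pushforward_id:
  assumes "w \<in> chain_weights P lt"
  shows "pushforward P id w = w"
proof
  fix v
  show "pushforward P id w v = w v"
  proof (cases "v \<in> P")
    case True
    then have "{x\<in>P. id x = v} = {v}" by auto
    then show ?thesis by (simp add: pushforward_def)
  next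
    case False
    then show ?thesis using chain_weights_support[OF assms] by (force simp: pushforward_def)
  qed
qed

lemma order_preserving_comp:
  "order_preserving P lt lt' f \<Longrightarrow> order_preserving Q lt' lt'' g \<Longrightarrow> f ` P \<subseteq> Q \<Longrightarrow>
    order_preserving P lt lt'' (g \<circ> f)"
  unfolding order_preserving_def by (simp add: image_subset_iff) metis

lemma order_preserving_id: "order_preserving P lt lt id"
  by (simp add: order_preserving_def)

lemma order_preserving_const: "order_preserving P lt lt' (\<lambda>_. z)"
  by (simp add: order_preserving_def)

lemma homotopy_equivalent_order_complex_retract:
  assumes finP: "finite P" and finQ: "finite Q"
    and sP: "strict_order_on P lt" and sQ: "strict_order_on Q lt'"
    and i: "i ` Q \<subseteq> P" "order_preserving Q lt' lt i"
    and c: "c ` P \<subseteq> Q" "order_preserving P lt lt' c"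
    and ci: "\<forall>y\<in>Q. c (i y) = y" and ic: "\<forall>x\<in>P. i (c x) = x \<or> lt (i (c x)) x"
  shows "order_complex_realization P lt homotopy_equivalent_space order_complex_realization Q lt'"
  unfolding homotopy_equivalent_space_def
proof (intro exI conjI)
  let ?P = "order_complex_realization P lt" and ?Q = "order_complex_realization Q lt'"
  show c_cont: "continuous_map ?P ?Q (pushforward P c)"
    by (rule continuous_map_pushforward[OF finP c])
  show i_cont: "continuous_map ?Q ?P (pushforward Q i)"
    by (rule continuous_map_pushforward[OF finQ i])
  have "homotopic_with (\<lambda>_. True) ?P ?P (pushforward P (i \<circ> c)) (pushforward P id)"
    by (rule homotopic_pushforward[OF finP sP sP])
       (use i c ic order_preserving_comp[OF c(2) i(2) c(1)] order_preserving_id in auto)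
  then show "homotopic_with (\<lambda>_. True) ?P ?P (pushforward Q i \<circ> pushforward P c) id"
    by (rule homotopic_with_eq)
       (auto simp: topspace_order_complex_realization pushforward_comp[OF finP finQ c(1)] pushforward_id)
  have "(pushforward P c \<circ> pushforward Q i) w = w" if "w \<in> chain_weights Q lt'" for w
  proof -
    have "(pushforward P c \<circ> pushforward Q i) w = pushforward Q (c \<circ> i) w"
      by (simp add: pushforward_comp[OF finQ finP i(1)])
    also have "\<dots> = pushforward Q id w"
      unfolding pushforward_def using ci by (intro ext sum.cong) auto
    finally show ?thesis using pushforward_id[OF that] by simp
  qed
  then show "homotopic_with (\<lambda>_. True) ?Q ?Q (pushforward P c \<circ> pushforward Q i) id"
    by (intro homotopic_with_equal continuous_map_compose[OF i_cont c_cont])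
       (auto simp: topspace_order_complex_realization)
qed

lemma homotopy_equivalent_order_complex_point:
  assumes finP: "finite P" and sP: "strict_order_on P lt" and z: "z \<in> P"
    and c: "c ` P \<subseteq> P" "order_preserving P lt lt c"
    and c_le: "\<forall>x\<in>P. c x = x \<or> lt (c x) x" and c_le_z: "\<forall>x\<in>P. c x = z \<or> lt (c x) z"
  shows "order_complex_realization P lt homotopy_equivalent_space (discrete_topology {()})"
  unfolding homotopy_equivalent_space_def
proof (intro exI conjI)
  let ?P = "order_complex_realization P lt"
  define e where "e = (\<lambda>v. if v = z then 1 else 0::real)"
  have e: "e \<in> chain_weights P lt"
    by (rule chain_weightsI[where V = "{z}"]) (auto simp: e_def z split: if_splits)
  have "homotopic_with (\<lambda>_. True) ?P ?P (pushforward P id) (pushforward P c)"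
    by (rule homotopic_with_symD, rule homotopic_pushforward[OF finP sP sP c])
       (use order_preserving_id c_le in auto)
  moreover have "homotopic_with (\<lambda>_. True) ?P ?P (pushforward P c) (pushforward P (\<lambda>_. z))"
    by (rule homotopic_pushforward[OF finP sP sP c]) (use order_preserving_const c_le_z z in auto)
  ultimately have h: "homotopic_with (\<lambda>_. True) ?P ?P (pushforward P id) (pushforward P (\<lambda>_. z))"
    by (rule homotopic_with_trans)
  have const: "pushforward P (\<lambda>_. z) w = e" if "w \<in> chain_weights P lt" for w
    unfolding pushforward_def e_def using sum_chain_weights[OF finP that] by auto
  show "homotopic_with (\<lambda>_. True) ?P ?P ((\<lambda>_. e) \<circ> (\<lambda>_. ())) id"
    by (rule homotopic_with_symD, rule homotopic_with_eq[OF h])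
       (auto simp: topspace_order_complex_realization pushforward_id const)
  show "continuous_map ?P (discrete_topology {()}) (\<lambda>_. ())" by simp
  show "continuous_map (discrete_topology {()}) ?P (\<lambda>_. e)"
    using e by (simp add: topspace_order_complex_realization)
  show "homotopic_with (\<lambda>_. True) (discrete_topology {()}) (discrete_topology {()}) ((\<lambda>_. ()) \<circ> (\<lambda>_. e)) id"
    by (rule homotopic_with_equal) auto
qed

section \<open>The monoid \<Lambda>^{p,q}\<close>

text \<open>Normal form of a representative: the relation q b = p a trades b-multiples of q for a.\<close>

definition lam_nf :: "nat \<Rightarrow> nat \<Rightarrow> nat \<times> nat \<Rightarrow> nat \<times> nat" where
  "lam_nf p q x = (fst x + snd x div q * p, snd x mod q)"

lemma lcong_refl: "lcong p q x x"
  by (simp add: lcong_def)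

lemma lcong_sym: "lcong p q x y \<Longrightarrow> lcong p q y x"
  unfolding lcong_def by (rule equivclp_sym)

lemma lcong_trans: "lcong p q x y \<Longrightarrow> lcong p q y z \<Longrightarrow> lcong p q x z"
  unfolding lcong_def by (rule equivclp_trans)

lemma lam_nf_lcong:
  assumes "lcong p q x y" "0 < q"
  shows "lam_nf p q x = lam_nf p q y"
  using assms(1) unfolding lcong_def
proof (induct rule: equivclp_induct)
  case (step y z)
  have "lam_nf p q y = lam_nf p q z" if "gen_rel p q y z \<or> gen_rel p q z y"
    using that assms(2) by (auto simp: gen_rel_def lam_nf_def padd_def)
  with step show ?case by simp
qed simp

lemma lcong_shift: "lcong p q (m + k * p, n) (m, n + k * q)"
proof (induct k arbitrary: m n)
  case (Suc k)
  have "gen_rel p q (m + p, n + k * q) (m, n + Suc k * q)"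
    unfolding gen_rel_def padd_def by (rule exI[of _ "(m, n + k * q)"]) simp
  then have "lcong p q (m + p, n + k * q) (m, n + Suc k * q)"
    unfolding lcong_def by auto
  with Suc[of "m + p" n] show ?case by (simp add: add_ac lcong_trans)
qed (simp add: lcong_refl)

lemma lcong_lam_nf: "lcong p q x (lam_nf p q x)"
proof -
  obtain m n where x: "x = (m, n)" by force
  have "lcong p q (m + n div q * p, n mod q) (m, n mod q + n div q * q)" by (rule lcong_shift)
  then show ?thesis by (simp add: x lam_nf_def lcong_sym)
qed

lemma lcong_iff_lam_nf: "0 < q \<Longrightarrow> lcong p q x y \<longleftrightarrow> lam_nf p q x = lam_nf p q y"
  by (metis lam_nf_lcong lcong_lam_nf lcong_sym lcong_trans)

lemma lcls_eq_iff:
  assumes "0 < q"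
  shows "lcls p q x = lcls p q y \<longleftrightarrow> lam_nf p q x = lam_nf p q y"
proof
  assume "lcls p q x = lcls p q y"
  then have "y \<in> lcls p q x" by (simp add: lcls_def lcong_refl)
  then show "lam_nf p q x = lam_nf p q y" by (simp add: lcls_def lcong_iff_lam_nf[OF assms])
qed (simp add: lcls_def lcong_iff_lam_nf[OF assms])

lemma lam_nf_idem: "0 < q \<Longrightarrow> lam_nf p q (lam_nf p q x) = lam_nf p q x"
  by (simp add: lam_nf_def)

lemma lam_nf_padd_lam_nf: "0 < q \<Longrightarrow> lam_nf p q (padd (lam_nf p q x) y) = lam_nf p q (padd x y)"
proof -
  assume q: "0 < q"
  obtain a b c d where "x = (a, b)" "y = (c, d)" by force
  moreover have "(b + d) div q = b div q + (b mod q + d) div q"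
    by (simp add: div_add1_eq[of b d q] div_add1_eq[of "b mod q" d q])
  moreover have "(b mod q + d) mod q = (b + d) mod q" by (simp add: mod_add_left_eq)
  ultimately show ?thesis by (simp add: lam_nf_def padd_def algebra_simps)
qed

lemma lam_nf_padd_cong:
  assumes "0 < q" "lam_nf p q x = lam_nf p q x'" "lam_nf p q y = lam_nf p q y'"
  shows "lam_nf p q (padd x y) = lam_nf p q (padd x' y')"
proof -
  have comm: "padd u v = padd v u" for u v by (simp add: padd_def add.commute)
  have "lam_nf p q (padd x y) = lam_nf p q (padd x' y)"
    by (metis assms(1,2) lam_nf_padd_lam_nf)
  also have "\<dots> = lam_nf p q (padd x' y')"
    by (metis assms(1,3) comm lam_nf_padd_lam_nf)
  finally show ?thesis .
qed

lemma ladd_lcls: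
  assumes q: "0 < q"
  shows "ladd p q (lcls p q x) (lcls p q y) = lcls p q (padd x y)"
proof (intro set_eqI iffI)
  fix z assume "z \<in> ladd p q (lcls p q x) (lcls p q y)"
  then obtain x' y' where "lcong p q x x'" "lcong p q y y'" "lcong p q (padd x' y') z"
    unfolding ladd_def lcls_def by auto
  then show "z \<in> lcls p q (padd x y)"
    using lam_nf_padd_cong[OF q, of p x x' y y'] by (simp add: lcls_def lcong_iff_lam_nf[OF q])
next
  fix z assume "z \<in> lcls p q (padd x y)"
  then show "z \<in> ladd p q (lcls p q x) (lcls p q y)"
    unfolding ladd_def lcls_def using lcong_refl by blast
qed

lemma lle_lcls_iff:
  "0 < q \<Longrightarrow> lle p q (lcls p q x) (lcls p q y) \<longleftrightarrow> (\<exists>z. lam_nf p q (padd x z) = lam_nf p q y)"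
  unfolding lle_def Lam_def by (auto simp: ladd_lcls lcls_eq_iff)

lemma Lam_cases: "X \<in> Lam p q \<Longrightarrow> (\<And>x. X = lcls p q x \<Longrightarrow> thesis) \<Longrightarrow> thesis"
  unfolding Lam_def by auto

lemma lcls_in_Lam: "lcls p q x \<in> Lam p q"
  by (simp add: Lam_def)

lemma lcls_eq_lzero_iff:
  assumes "0 < p" "0 < q"
  shows "lcls p q x = lzero p q \<longleftrightarrow> x = (0, 0)"
proof -
  obtain a b where x: "x = (a, b)" by force
  have "b = 0" if "b div q = 0" "b mod q = 0" using that div_mult_mod_eq[of b q] by simp
  then show ?thesis using assms by (auto simp: x lzero_def lcls_eq_iff lam_nf_def)
qed

lemma padd_eq_00_iff: "padd x y = (0, 0) \<longleftrightarrow> x = (0, 0) \<and> y = (0, 0)"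
  by (cases x, cases y) (auto simp: padd_def)

lemma lam_nf_padd_eq_self:
  assumes "0 < p" "0 < q" "lam_nf p q (padd x z) = lam_nf p q x"
  shows "z = (0, 0)"
proof -
  obtain a b c d where xz: "x = (a, b)" "z = (c, d)" by force
  have e1: "a + c + (b + d) div q * p = a + b div q * p" and e2: "(b + d) mod q = b mod q"
    using assms(3) by (simp_all add: xz lam_nf_def padd_def)
  have "b div q * p \<le> (b + d) div q * p" by (simp add: div_le_mono)
  then have "c = 0" and "(b + d) div q * p = b div q * p" using e1 by linarith+
  then have "(b + d) div q = b div q" using assms(1) by simp
  then have "b + d = b" using e2 by (metis div_mult_mod_eq)
  then show ?thesis using \<open>c = 0\<close> xz by simp
qed

lemma lam_nf_padd_assoc:
  assumes q: "0 < q" "lam_nf p q (padd x z1) = lam_nf p q y" "lam_nf p q (padd y z2) = lam_nf p q w"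
  shows "lam_nf p q (padd x (padd z1 z2)) = lam_nf p q w"
proof -
  have "padd x (padd z1 z2) = padd (padd x z1) z2" by (simp add: padd_def add.assoc)
  then show ?thesis using assms by (metis lam_nf_padd_lam_nf)
qed

lemma lle_trans:
  assumes "0 < q" "X \<in> Lam p q" "Y \<in> Lam p q" "Z \<in> Lam p q" "lle p q X Y" "lle p q Y Z"
  shows "lle p q X Z"
proof -
  obtain x y w where d: "X = lcls p q x" "Y = lcls p q y" "Z = lcls p q w"
    using assms(2-4) by (auto elim!: Lam_cases)
  obtain z1 z2 where "lam_nf p q (padd x z1) = lam_nf p q y" "lam_nf p q (padd y z2) = lam_nf p q w"
    using assms(5,6) by (auto simp: d lle_lcls_iff[OF assms(1)])
  from lam_nf_padd_assoc[OF assms(1) this] show ?thesis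
    unfolding d lle_lcls_iff[OF assms(1)] by blast
qed

lemma lle_antisym:
  assumes "0 < p" "0 < q" "X \<in> Lam p q" "Y \<in> Lam p q" "lle p q X Y" "lle p q Y X"
  shows "X = Y"
proof -
  obtain x y where d: "X = lcls p q x" "Y = lcls p q y"
    using assms(3,4) by (auto elim!: Lam_cases)
  obtain z1 z2 where e: "lam_nf p q (padd x z1) = lam_nf p q y" "lam_nf p q (padd y z2) = lam_nf p q x"
    using assms(5,6) by (auto simp: d lle_lcls_iff[OF assms(2)])
  have "padd z1 z2 = (0, 0)"
    using lam_nf_padd_eq_self[OF assms(1,2) lam_nf_padd_assoc[OF assms(2) e]] .
  then have "padd x z1 = x" by (simp add: padd_eq_00_iff padd_def)
  then show ?thesis using e(1) by (simp add: d lcls_eq_iff[OF assms(2)])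
qed

lemma strict_order_on_lless:
  assumes "0 < p" "0 < q" "S \<subseteq> Lam p q"
  shows "strict_order_on S (lless p q)"
  unfolding strict_order_on_def lless_def
proof (intro conjI ballI impI)
  fix x y z assume xyz: "x \<in> S" "y \<in> S" "z \<in> S"
    and xy: "lle p q x y \<and> x \<noteq> y" and yz: "lle p q y z \<and> y \<noteq> z"
  have L: "x \<in> Lam p q" "y \<in> Lam p q" "z \<in> Lam p q" using xyz assms(3) by auto
  show "lle p q x z" using lle_trans[OF assms(2) L] xy yz by blast
  show "x \<noteq> z" using lle_antisym[OF assms(1,2) L(1,2)] xy yz by blast
qed simp

lemma lzero_lle: "0 < q \<Longrightarrow> X \<in> Lam p q \<Longrightarrow> lle p q (lzero p q) X"
  unfolding lzero_def by (auto elim!: Lam_cases simp: lle_lcls_iff padd_def intro!: exI)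

lemma fst_lam_nf_le_padd: "fst (lam_nf p q x) \<le> fst (lam_nf p q (padd x z))"
proof -
  have "snd x div q * p \<le> (snd x + snd z) div q * p" by (simp add: div_le_mono)
  then show ?thesis unfolding lam_nf_def padd_def fst_conv snd_conv by linarith
qed

lemma finite_lopen:
  assumes q: "0 < q" and L: "L \<in> Lam p q"
  shows "finite (lopen p q X L)"
proof -
  obtain l where l: "L = lcls p q l" using L by (auto elim!: Lam_cases)
  have "lopen p q X L \<subseteq> lcls p q ` ({0..fst (lam_nf p q l)} \<times> {0..<q})"
  proof
    fix Y assume "Y \<in> lopen p q X L"
    then obtain y where y: "Y = lcls p q y" and "lle p q Y L"
      unfolding lopen_def lless_def by (auto elim!: Lam_cases)
    then obtain z where "lam_nf p q (padd y z) = lam_nf p q l" using q by (auto simp: l lle_lcls_iff)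
    then have "fst (lam_nf p q y) \<le> fst (lam_nf p q l)"
      using fst_lam_nf_le_padd[of p q y z] by simp
    moreover have "snd (lam_nf p q y) < q" using q by (simp add: lam_nf_def)
    moreover have "Y = lcls p q (lam_nf p q y)" using q by (simp add: y lcls_eq_iff lam_nf_idem)
    ultimately show "Y \<in> lcls p q ` ({0..fst (lam_nf p q l)} \<times> {0..<q})"
      by (intro image_eqI[of _ _ "lam_nf p q y"]) (auto simp: mem_Times_iff)
  qed
  then show ?thesis by (rule finite_subset) simp
qed

section \<open>Transition maps\<close>

lemma tau_0: "tau p r 0 = 0"
  by (simp add: tau_def)

lemma tau_add_mult: "0 < p \<Longrightarrow> tau p r (a + k * p) = tau p r a + k * r"
  by (simp add: tau_def algebra_simps)

lemma tau_le_tau_Suc: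
  assumes "0 < p"
  shows "tau p r a \<le> tau p r (Suc a)"
proof (cases "Suc (a mod p) = p")
  case True
  then have "Suc a div p = Suc (a div p)" "Suc a mod p = 0"
    using assms by (simp_all add: div_Suc mod_Suc)
  then show ?thesis by (simp add: tau_def)
next
  case False
  then have "Suc a div p = a div p" "Suc a mod p = Suc (a mod p)"
    using assms by (simp_all add: div_Suc mod_Suc)
  then show ?thesis by (simp add: tau_def)
qed

lemma tau_mono: "0 < p \<Longrightarrow> a \<le> b \<Longrightarrow> tau p r a \<le> tau p r b"
  using tau_le_tau_Suc[of p r] by (rule lift_Suc_mono_le)

lemma tau_tau:
  assumes "0 < p" "0 < r"
  shows "tau r p (tau p r k) = k div p * p + min (k mod p) (r - 1)"
proof -
  have "min (k mod p) (r - 1) < r" using assms(2) by linarith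
  then have "tau p r k div r = k div p" "tau p r k mod r = min (k mod p) (r - 1)"
    unfolding tau_def by simp_all
  moreover have "k mod p \<le> p - 1" using assms(1) by (simp add: less_Suc_eq_le[symmetric])
  ultimately show ?thesis by (simp add: tau_def min_def)
qed

lemma tau_tau_eq:
  assumes "0 < p" "p \<le> r"
  shows "tau r p (tau p r k) = k"
proof -
  have "k mod p \<le> r - 1" using mod_less_divisor[OF assms(1), of k] assms(2) by linarith
  then show ?thesis using tau_tau[of p r k] assms by (simp add: min_absorb1)
qed

lemma tau_tau_le: "0 < p \<Longrightarrow> 0 < r \<Longrightarrow> tau r p (tau p r k) \<le> k"
  using tau_tau[of p r k] div_mult_mod_eq[of k p] by linarith

lemma tau_eq_0_iff:
  assumes "1 < r"
  shows "tau p r k = 0 \<longleftrightarrow> k = 0"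
proof
  assume "tau p r k = 0"
  then have "k div p * r = 0" "min (k mod p) (r - 1) = 0" by (simp_all add: tau_def)
  then have "k div p = 0" "k mod p = 0" using assms by auto
  then show "k = 0" using div_mult_mod_eq[of k p] by simp
qed (simp add: tau_0)

lemma lcls_eqI:
  assumes "lcong p q x y"
  shows "lcls p q x = lcls p q y"
  unfolding lcls_def using lcong_trans[OF assms] lcong_trans[OF lcong_sym[OF assms]] by auto

lemma lcls_tau_lam_nf:
  assumes "0 < p" "0 < q"
  shows "lcls r s (tau p r (fst (lam_nf p q x)), tau q s (snd (lam_nf p q x)))
       = lcls r s (tau p r (fst x), tau q s (snd x))"
proof -
  obtain a b where x: "x = (a, b)" by force
  define k where "k = b div q"
  have "tau q s b = tau q s (b mod q + k * q)" by (simp add: k_def)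
  also have "\<dots> = tau q s (b mod q) + k * s" by (rule tau_add_mult[OF assms(2)])
  finally have "tau q s b = tau q s (b mod q) + k * s" .
  moreover have "lcong r s (tau p r a + k * r, tau q s (b mod q)) (tau p r a, tau q s (b mod q) + k * s)"
    by (rule lcong_shift)
  ultimately show ?thesis
    by (simp add: x lam_nf_def tau_add_mult[OF assms(1)] lcls_eqI flip: k_def)
qed

lemma trans_map_lcls:
  assumes "0 < p" "0 < q"
  shows "trans_map p q r s (lcls p q x) = lcls r s (tau p r (fst x), tau q s (snd x))"
proof -
  define y where "y = (SOME y. y \<in> lcls p q x)"
  have "y \<in> lcls p q x" unfolding y_def by (rule someI[of _ x]) (simp add: lcls_def lcong_refl)
  then have "lam_nf p q x = lam_nf p q y" by (simp add: lcls_def lcong_iff_lam_nf[OF assms(2)])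
  then show ?thesis
    using lcls_tau_lam_nf[OF assms, of r s x] lcls_tau_lam_nf[OF assms, of r s y]
    by (simp add: trans_map_def y_def Let_def)
qed

lemma trans_map_in_Lam: "trans_map p q r s X \<in> Lam r s"
  by (simp add: trans_map_def Let_def lcls_in_Lam)

lemma trans_map_mono:
  assumes "0 < p" "0 < q" "0 < s" "X \<in> Lam p q" "Y \<in> Lam p q" "lle p q X Y"
  shows "lle r s (trans_map p q r s X) (trans_map p q r s Y)"
proof -
  obtain x y where d: "X = lcls p q x" "Y = lcls p q y" using assms(4,5) by (auto elim!: Lam_cases)
  obtain z where "lam_nf p q (padd x z) = lam_nf p q y"
    using assms(6) by (auto simp: d lle_lcls_iff[OF assms(2)])
  then have Y: "Y = lcls p q (padd x z)" using assms(2) by (simp add: d lcls_eq_iff)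
  let ?a = "tau p r (fst x)" and ?b = "tau q s (snd x)"
  let ?a' = "tau p r (fst x + fst z)" and ?b' = "tau q s (snd x + snd z)"
  have "?a \<le> ?a'" "?b \<le> ?b'" using tau_mono assms(1,2) by auto
  then have "padd (?a, ?b) (?a' - ?a, ?b' - ?b) = (?a', ?b')" by (simp add: padd_def)
  then show ?thesis
    unfolding d(1) Y trans_map_lcls[OF assms(1,2)] lle_lcls_iff[OF assms(3)]
    by (intro exI[of _ "(?a' - ?a, ?b' - ?b)"]) (simp add: padd_def)
qed

lemma trans_map_trans_map_eq:
  assumes "0 < p" "0 < q" "p \<le> r" "q \<le> s" "X \<in> Lam p q"
  shows "trans_map r s p q (trans_map p q r s X) = X"
proof -
  obtain x where "X = lcls p q x" using assms(5) by (auto elim!: Lam_cases)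
  moreover have "0 < r" "0 < s" using assms by auto
  ultimately show ?thesis using assms by (simp add: trans_map_lcls tau_tau_eq)
qed

lemma trans_map_trans_map_le:
  assumes "0 < p" "0 < q" "0 < r" "0 < s" "X \<in> Lam p q"
  shows "lle p q (trans_map r s p q (trans_map p q r s X)) X"
proof -
  obtain x where X: "X = lcls p q x" using assms(5) by (auto elim!: Lam_cases)
  let ?a = "tau r p (tau p r (fst x))" and ?b = "tau s q (tau q s (snd x))"
  have "?a \<le> fst x" "?b \<le> snd x" using tau_tau_le assms(1-4) by auto
  then have "padd (?a, ?b) (fst x - ?a, snd x - ?b) = x" by (simp add: padd_def)
  then show ?thesis
    unfolding X trans_map_lcls[OF assms(1,2)] trans_map_lcls[OF assms(3,4)] lle_lcls_iff[OF assms(2)]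
    by (intro exI[of _ "(fst x - ?a, snd x - ?b)"]) simp
qed

lemma trans_map_eq_lzero_iff:
  assumes "0 < p" "0 < q" "1 < r" "1 < s" "X \<in> Lam p q"
  shows "trans_map p q r s X = lzero r s \<longleftrightarrow> X = lzero p q"
proof -
  obtain x where X: "X = lcls p q x" using assms(5) by (auto elim!: Lam_cases)
  have "0 < r" "0 < s" using assms(3,4) by auto
  then show ?thesis
    using assms by (simp add: X trans_map_lcls lcls_eq_lzero_iff tau_eq_0_iff prod_eq_iff)
qed

section \<open>Intervals under the transition maps\<close>

lemma mem_lopen_lzero_iff:
  "0 < q \<Longrightarrow> Z \<in> lopen p q (lzero p q) L \<longleftrightarrow>
    Z \<in> Lam p q \<and> Z \<noteq> lzero p q \<and> lle p q Z L \<and> Z \<noteq> L"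
  by (auto simp: lopen_def lless_def lzero_lle)

lemma order_preserving_lless:
  assumes "S \<subseteq> Lam p q"
    and "\<And>X Y. X \<in> Lam p q \<Longrightarrow> Y \<in> Lam p q \<Longrightarrow> lle p q X Y \<Longrightarrow> lle r s (f X) (f Y)"
  shows "order_preserving S (lless p q) (lless r s) f"
  using assms unfolding order_preserving_def lless_def by blast

locale transition_maps =
  fixes p q r s :: nat
  assumes r: "1 < r" "r \<le> p" and s: "1 < s" "s \<le> q"
begin

abbreviation down :: "(nat \<times> nat) set \<Rightarrow> (nat \<times> nat) set" where
  "down \<equiv> trans_map p q r s"

abbreviation up :: "(nat \<times> nat) set \<Rightarrow> (nat \<times> nat) set" where
  "up \<equiv> trans_map r s p q"

lemma pos: "0 < p" "0 < q" "0 < r" "0 < s"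
  using r s by auto

lemma down_up: "Y \<in> Lam r s \<Longrightarrow> down (up Y) = Y"
  using trans_map_trans_map_eq pos r s by blast

lemma up_down_le: "X \<in> Lam p q \<Longrightarrow> lle p q (up (down X)) X"
  using trans_map_trans_map_le pos by blast

lemma down_mono: "X \<in> Lam p q \<Longrightarrow> Y \<in> Lam p q \<Longrightarrow> lle p q X Y \<Longrightarrow> lle r s (down X) (down Y)"
  using trans_map_mono pos by blast

lemma up_mono: "X \<in> Lam r s \<Longrightarrow> Y \<in> Lam r s \<Longrightarrow> lle r s X Y \<Longrightarrow> lle p q (up X) (up Y)"
  using trans_map_mono pos by blast

lemma down_eq_lzero_iff: "X \<in> Lam p q \<Longrightarrow> down X = lzero r s \<longleftrightarrow> X = lzero p q"
  using trans_map_eq_lzero_iff pos r s by blast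

lemma up_eq_lzero_iff: "Y \<in> Lam r s \<Longrightarrow> up Y = lzero p q \<longleftrightarrow> Y = lzero r s"
  using trans_map_eq_lzero_iff pos r s by simp

lemma down_image_lopen:
  assumes "L \<in> Lam p q" "up (down L) = L"
  shows "down ` lopen p q (lzero p q) L \<subseteq> lopen r s (lzero r s) (down L)"
proof
  fix Y assume "Y \<in> down ` lopen p q (lzero p q) L"
  then obtain X where Y: "Y = down X"
    and X: "X \<in> Lam p q" "X \<noteq> lzero p q" "lle p q X L" "X \<noteq> L"
    using pos by (auto simp: mem_lopen_lzero_iff)
  have "down X \<noteq> down L" \<comment> \<open>otherwise L = up (down X) \<le> X\<close>
    using up_down_le[OF X(1)] assms(2) lle_antisym[OF pos(1,2) X(1) assms(1) X(3)] X(4) by metis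
  then show "Y \<in> lopen r s (lzero r s) (down L)"
    using down_mono[OF X(1) assms(1) X(3)] down_eq_lzero_iff[OF X(1)] X(2) pos
    by (simp add: Y mem_lopen_lzero_iff trans_map_in_Lam)
qed

lemma up_image_lopen:
  assumes "L \<in> Lam p q" "up (down L) = L"
  shows "up ` lopen r s (lzero r s) (down L) \<subseteq> lopen p q (lzero p q) L"
proof
  fix X assume "X \<in> up ` lopen r s (lzero r s) (down L)"
  then obtain Y where X: "X = up Y"
    and Y: "Y \<in> Lam r s" "Y \<noteq> lzero r s" "lle r s Y (down L)" "Y \<noteq> down L"
    using pos by (auto simp: mem_lopen_lzero_iff)
  have "up Y \<noteq> L" using down_up[OF Y(1)] Y(4) by metis
  then show "X \<in> lopen p q (lzero p q) L"
    using up_mono[OF Y(1) trans_map_in_Lam Y(3)] up_eq_lzero_iff[OF Y(1)] Y(2) assms(2) pos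
    by (simp add: X mem_lopen_lzero_iff trans_map_in_Lam)
qed

lemma up_down_image_lopen:
  assumes "L \<in> Lam p q"
  shows "(up \<circ> down) ` lopen p q (lzero p q) L \<subseteq> lopen p q (lzero p q) L"
proof
  fix Z assume "Z \<in> (up \<circ> down) ` lopen p q (lzero p q) L"
  then obtain X where Z: "Z = up (down X)"
    and X: "X \<in> Lam p q" "X \<noteq> lzero p q" "lle p q X L" "X \<noteq> L"
    using pos by (auto simp: mem_lopen_lzero_iff)
  have "up (down X) \<noteq> L"
    using up_down_le[OF X(1)] lle_antisym[OF pos(1,2) X(1) assms X(3)] X(4) by metis
  moreover have "up (down X) \<noteq> lzero p q"
    using up_eq_lzero_iff down_eq_lzero_iff X(1,2) trans_map_in_Lam by metis
  moreover have "lle p q (up (down X)) L"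
    using lle_trans[OF pos(2) trans_map_in_Lam X(1) assms up_down_le[OF X(1)] X(3)] .
  ultimately show "Z \<in> lopen p q (lzero p q) L"
    using pos by (simp add: Z mem_lopen_lzero_iff trans_map_in_Lam)
qed

lemma up_down_in_lopen:
  assumes "L \<in> Lam p q" "L \<noteq> lzero p q" "up (down L) \<noteq> L"
  shows "up (down L) \<in> lopen p q (lzero p q) L"
  using assms up_down_le[OF assms(1)] up_eq_lzero_iff down_eq_lzero_iff pos
  by (simp add: mem_lopen_lzero_iff trans_map_in_Lam)

lemma frobenius_complex_homotopy_equivalent_down:
  assumes L: "L \<in> Lam p q" and fixed: "up (down L) = L"
  shows "frobenius_complex p q L homotopy_equivalent_space frobenius_complex r s (down L)"
proof -
  let ?P = "lopen p q (lzero p q) L" and ?Q = "lopen r s (lzero r s) (down L)"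
  have PL: "?P \<subseteq> Lam p q" and QL: "?Q \<subseteq> Lam r s" by (auto simp: lopen_def)
  have "order_complex_realization ?P (lless p q) homotopy_equivalent_space
        order_complex_realization ?Q (lless r s)"
  proof (rule homotopy_equivalent_order_complex_retract)
    show "finite ?P" "finite ?Q" using finite_lopen pos L trans_map_in_Lam by auto
    show "strict_order_on ?P (lless p q)" "strict_order_on ?Q (lless r s)"
      using strict_order_on_lless pos PL QL by auto
    show "up ` ?Q \<subseteq> ?P" "down ` ?P \<subseteq> ?Q"
      using up_image_lopen[OF L fixed] down_image_lopen[OF L fixed] .
    show "order_preserving ?Q (lless r s) (lless p q) up"
      by (rule order_preserving_lless[OF QL up_mono])
    show "order_preserving ?P (lless p q) (lless r s) down"
      by (rule order_preserving_lless[OF PL down_mono])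
    show "\<forall>Y\<in>?Q. down (up Y) = Y" using down_up QL by blast
    show "\<forall>X\<in>?P. up (down X) = X \<or> lless p q (up (down X)) X"
      using up_down_le PL by (auto simp: lless_def)
  qed
  then show ?thesis by (simp add: frobenius_complex_def)
qed

lemma frobenius_complex_contractible:
  assumes L: "L \<in> Lam p q" "L \<noteq> lzero p q" and nonfix: "up (down L) \<noteq> L"
  shows "frobenius_complex p q L homotopy_equivalent_space discrete_topology {()}"
proof -
  let ?P = "lopen p q (lzero p q) L"
  have PL: "?P \<subseteq> Lam p q" by (auto simp: lopen_def)
  have "order_complex_realization ?P (lless p q) homotopy_equivalent_space discrete_topology {()}"
  proof (rule homotopy_equivalent_order_complex_point)
    show "finite ?P" using finite_lopen pos L by auto
    show "strict_order_on ?P (lless p q)" using strict_order_on_lless pos PL by auto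
    show "up (down L) \<in> ?P" by (rule up_down_in_lopen[OF L nonfix])
    show "(up \<circ> down) ` ?P \<subseteq> ?P" by (rule up_down_image_lopen[OF L(1)])
    show "order_preserving ?P (lless p q) (lless p q) (up \<circ> down)"
      by (rule order_preserving_lless[OF PL]) (simp add: up_mono down_mono trans_map_in_Lam)
    show "\<forall>X\<in>?P. (up \<circ> down) X = X \<or> lless p q ((up \<circ> down) X) X"
      using up_down_le PL by (auto simp: lless_def)
    show "\<forall>X\<in>?P. (up \<circ> down) X = up (down L) \<or> lless p q ((up \<circ> down) X) (up (down L))"
      using PL L(1) by (auto simp: lless_def lopen_def up_mono down_mono trans_map_in_Lam)
  qed
  then show ?thesis by (simp add: frobenius_complex_def)
qed

end

theorem theorem2p5:
  fixes p q :: nat and L :: "(nat \<times> nat) set"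
  assumes "p \<ge> 2" and "q \<ge> 2"
    and "L \<in> Lam p q" and "L \<noteq> lzero p q"
  shows "(trans_map 2 2 p q (trans_map p q 2 2 L) = L \<longrightarrow>
            frobenius_complex p q L homotopy_equivalent_space
            frobenius_complex 2 2 (trans_map p q 2 2 L))
       \<and> (trans_map 2 2 p q (trans_map p q 2 2 L) \<noteq> L \<longrightarrow>
            frobenius_complex p q L homotopy_equivalent_space
            (discrete_topology {()}))"
proof -
  interpret transition_maps p q 2 2
    using assms(1,2) by unfold_locales auto
  show ?thesis
    using frobenius_complex_homotopy_equivalent_down[OF assms(3)]
      frobenius_complex_contractible[OF assms(3,4)] by blast
qed

end
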